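(* There are computable functions $f$ and $g$ such that for every mixed graph $G$ without directed cycles, $\chi(G)\le f(\mathrm{tw}(G^+))$ and $\chi(G)\le g(\mathrm{td}(G))$. Moreover, for every such $G$, $\chi(G)\le 2\,\mathrm{vc}(G)+1$.
   Context: A mixed graph $G$ consists of a finite vertex set $V(G)$, a set $E(G)$ of undirected edges and a set $A(G)$ of directed arcs; it is simple and contains no directed cycle. A $k$-coloring $c\colon V(G)\to\{1,\dots,k\}$ is proper if $c(u)\neq c(v)$ for every edge $\{u,v\}$ and $c(u)<c(v)$ for every arc $(u,v)$; $\chi(G)$ is the minimum such $k$. The transitive closure $G^+$ is obtained from $G$ by adding every arc $(u,v)$ such that $G$ has a directed path from $u$ to $v$, and removing any edge parallel to such an arc. $\mathrm{tw}$, $\mathrm{td}$, $\mathrm{vc}$ denote the treewidth, treedepth, and vertex cover number of the underlying undirected graph (every arc replaced by an edge); $\mathrm{tw}(G^+)$ is the treewidth of the underlying undirected graph of $G^+$. *)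

theory Defs
  imports Main
begin

text \<open>The class of total recursive functions: closure of zero, successor and
projections under composition, primitive recursion and regular minimization.
recfn n h means h (viewed on argument lists of length n) is total recursive.\<close>

inductive recfn :: "nat \<Rightarrow> (nat list \<Rightarrow> nat) \<Rightarrow> bool" where
  rf_zero: "recfn n (\<lambda>xs. 0)"
| rf_succ: "recfn 1 (\<lambda>xs. Suc (hd xs))"
| rf_proj: "i < n \<Longrightarrow> recfn n (\<lambda>xs. xs ! i)"
| rf_comp: "recfn m g \<Longrightarrow> length fs = m \<Longrightarrow> (\<forall>f\<in>set fs. recfn n f) \<Longrightarrow>
            recfn n (\<lambda>xs. g (map (\<lambda>f. f xs) fs))"
| rf_prim: "recfn n g \<Longrightarrow> recfn (Suc (Suc n)) h \<Longrightarrow>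
            recfn (Suc n) (\<lambda>xs. rec_nat (g (tl xs)) (\<lambda>k r. h (r # k # tl xs)) (hd xs))"
| rf_mu: "recfn (Suc n) g \<Longrightarrow> (\<forall>xs. length xs = n \<longrightarrow> (\<exists>y. g (y # xs) = 0)) \<Longrightarrow>
          recfn n (\<lambda>xs. LEAST y. g (y # xs) = 0)"

definition computable :: "(nat \<Rightarrow> nat) \<Rightarrow> bool" where
  "computable f \<longleftrightarrow> (\<exists>h. recfn 1 h \<and> (\<forall>x. f x = h [x]))"

definition mixed_graph :: "nat set \<Rightarrow> nat set set \<Rightarrow> (nat \<times> nat) set \<Rightarrow> bool" where
  "mixed_graph V E A \<longleftrightarrow>
     finite V \<and>
     (\<forall>e\<in>E. \<exists>u v. e = {u, v} \<and> u \<noteq> v \<and> u \<in> V \<and> v \<in> V) \<and>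
     A \<subseteq> V \<times> V \<and> (\<forall>v. (v, v) \<notin> A) \<and>
     (\<forall>u v. (u, v) \<in> A \<longrightarrow> {u, v} \<notin> E) \<and>
     acyclic A"

definition proper_coloring :: "nat set \<Rightarrow> nat set set \<Rightarrow> (nat \<times> nat) set \<Rightarrow> nat \<Rightarrow> (nat \<Rightarrow> nat) \<Rightarrow> bool" where
  "proper_coloring V E A k c \<longleftrightarrow>
     (\<forall>v\<in>V. c v \<in> {1..k}) \<and>
     (\<forall>u v. {u, v} \<in> E \<longrightarrow> c u \<noteq> c v) \<and>
     (\<forall>u v. (u, v) \<in> A \<longrightarrow> c u < c v)"

definition chromatic_number :: "nat set \<Rightarrow> nat set set \<Rightarrow> (nat \<times> nat) set \<Rightarrow> nat" where
  "chromatic_number V E A = (LEAST k. \<exists>c. proper_coloring V E A k c)"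

text \<open>Transitive closure G^+: arcs A^+, edges parallel to new arcs removed.\<close>

definition closure_edges :: "nat set set \<Rightarrow> (nat \<times> nat) set \<Rightarrow> nat set set" where
  "closure_edges E A = {e \<in> E. \<not> (\<exists>u v. e = {u, v} \<and> (u, v) \<in> A\<^sup>+)}"

definition closure_arcs :: "(nat \<times> nat) set \<Rightarrow> (nat \<times> nat) set" where
  "closure_arcs A = A\<^sup>+"

definition underlying :: "nat set set \<Rightarrow> (nat \<times> nat) set \<Rightarrow> nat set set" where
  "underlying E A = E \<union> {{u, v} | u v. (u, v) \<in> A}"

definition adj_in :: "nat set set \<Rightarrow> nat set \<Rightarrow> (nat \<times> nat) set" where
  "adj_in E S = {(x, y). x \<in> S \<and> y \<in> S \<and> {x, y} \<in> E}"

definition connected_in :: "nat set set \<Rightarrow> nat set \<Rightarrow> bool" where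
  "connected_in E S \<longleftrightarrow> S \<noteq> {} \<and> (\<forall>u\<in>S. \<forall>v\<in>S. (u, v) \<in> (adj_in E S)\<^sup>*)"

definition tree_graph :: "nat set \<Rightarrow> nat set set \<Rightarrow> bool" where
  "tree_graph T TE \<longleftrightarrow>
     finite T \<and>
     (\<forall>e\<in>TE. \<exists>u v. e = {u, v} \<and> u \<noteq> v \<and> u \<in> T \<and> v \<in> T) \<and>
     connected_in TE T \<and>
     \<not> (\<exists>cs. 3 \<le> length cs \<and> distinct cs \<and> set cs \<subseteq> T \<and>
            (\<forall>i < length cs. {cs ! i, cs ! ((i + 1) mod length cs)} \<in> TE))"

definition tree_decomposition ::
  "nat set \<Rightarrow> nat set set \<Rightarrow> nat set \<Rightarrow> nat set set \<Rightarrow> (nat \<Rightarrow> nat set) \<Rightarrow> bool" where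
  "tree_decomposition V E T TE B \<longleftrightarrow>
     tree_graph T TE \<and>
     (\<forall>t\<in>T. B t \<subseteq> V) \<and>
     (\<forall>v\<in>V. \<exists>t\<in>T. v \<in> B t) \<and>
     (\<forall>e\<in>E. \<exists>t\<in>T. e \<subseteq> B t) \<and>
     (\<forall>v\<in>V. connected_in TE {t \<in> T. v \<in> B t})"

definition decomposition_width :: "nat set \<Rightarrow> (nat \<Rightarrow> nat set) \<Rightarrow> nat" where
  "decomposition_width T B = Max ((\<lambda>t. card (B t)) ` T) - 1"

definition treewidth :: "nat set \<Rightarrow> nat set set \<Rightarrow> nat" where
  "treewidth V E = (LEAST w. \<exists>T TE B. tree_decomposition V E T TE B \<and> decomposition_width T B = w)"

text \<open>Treedepth: minimum height of a rooted forest on V whose closure contains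
every edge. A rooted forest (through its closure) is encoded by its strict
ancestor relation R: transitive, irreflexive, and the ancestors of each vertex
form a chain. Height = max number of vertices on a root-to-node path.\<close>

definition forest_order :: "nat set \<Rightarrow> (nat \<times> nat) set \<Rightarrow> bool" where
  "forest_order V R \<longleftrightarrow>
     R \<subseteq> V \<times> V \<and> trans R \<and> irrefl R \<and>
     (\<forall>v\<in>V. \<forall>x y. (x, v) \<in> R \<and> (y, v) \<in> R \<longrightarrow> x = y \<or> (x, y) \<in> R \<or> (y, x) \<in> R)"

definition treedepth :: "nat set \<Rightarrow> nat set set \<Rightarrow> nat" where
  "treedepth V E = (LEAST h. \<exists>R. forest_order V R \<and>
       (\<forall>u v. {u, v} \<in> E \<longrightarrow> u = v \<or> (u, v) \<in> R \<or> (v, u) \<in> R) \<and>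
       (\<forall>v\<in>V. card {u. (u, v) \<in> R} + 1 \<le> h))"

definition vertex_cover_number :: "nat set \<Rightarrow> nat set set \<Rightarrow> nat" where
  "vertex_cover_number V E = (LEAST k. \<exists>S. S \<subseteq> V \<and> card S = k \<and> (\<forall>e\<in>E. e \<inter> S \<noteq> {}))"

end

theory Submission
  imports Defs
begin

(* Vertex cover S: S is colored injectively with even colors following a topological numbering
   of S for the reachability order A^+; every other vertex has all its neighbours in S and gets the
   odd color just above the largest number of an S-vertex from which it is reachable.

   The other two bounds stack palettes: if the vertices are split into layers that never decrease
   along arcs, and c properly colors each layer with k colors, then layer v * k + c v is a proper
   coloring of G.

   Treedepth: deleting the roots of an elimination forest of height d leaves one of height d - 1.
   Arcs stay inside a tree, so no vertex both reaches a root and is reached from one.  The vertices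
   reaching a root, the roots, the remaining vertices and those reached from a root form four such
   layers, so 4^d colors suffice by induction on d.

   Treewidth: a leaf bag of a tree decomposition either has a private vertex, of degree at most the
   width, or can be deleted; so the underlying graph of G^+ is degenerate and has a proper coloring c
   with tw + 1 colors.  The strict A^+-ancestors of v are adjacent to v in G^+, so the number of
   colors used on them is below tw + 1 and strictly increases along arcs; taking it as the layer
   gives (tw + 1)^2 <= 4^tw colors. *)

section \<open>Computability of exponentials\<close>

lemma recfn_one: "\<exists>g. recfn 0 g \<and> g [] = 1"
proof -
  have "recfn 0 (\<lambda>xs. Suc (hd (map (\<lambda>f. f xs) [\<lambda>xs. 0])))"
    by (rule rf_comp[OF rf_succ]) (auto intro: rf_zero)
  then show ?thesis by force
qed

lemma recfn_comp2:
  assumes "recfn 2 F" "recfn n G" "recfn n H"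
  shows "recfn n (\<lambda>xs. F [G xs, H xs])"
  using rf_comp[of 2 F "[G, H]" n] assms by simp

lemma recfn_add: "\<exists>F. recfn 2 F \<and> (\<forall>a b. F [a, b] = a + b)"
proof -
  have "recfn 1 (\<lambda>xs. xs ! 0)" by (rule rf_proj) simp
  moreover have "recfn 3 (\<lambda>xs. Suc (hd (map (\<lambda>f. f xs) [\<lambda>xs. xs ! 0])))"
    by (rule rf_comp[OF rf_succ]) (auto intro: rf_proj)
  ultimately have "recfn 2 (\<lambda>xs. rec_nat (tl xs ! 0) (\<lambda>k r. Suc r) (hd xs))"
    using rf_prim[of 1 "\<lambda>xs. xs ! 0" "\<lambda>xs. Suc (hd (map (\<lambda>f. f xs) [\<lambda>xs. xs ! 0]))"]
    by (simp add: numeral_eq_Suc)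
  moreover have "rec_nat b (\<lambda>k r. Suc r) a = a + b" for a b :: nat
    by (induction a) auto
  ultimately show ?thesis by force
qed

lemma computable_rec_nat:
  assumes "recfn 0 g" "recfn 2 h"
  shows "computable (rec_nat (g []) (\<lambda>k r. h [r, k]))"
proof -
  have "recfn 1 (\<lambda>xs. rec_nat (g (tl xs)) (\<lambda>k r. h (r # k # tl xs)) (hd xs))"
    using rf_prim[of 0 g h] assms by (simp add: numeral_eq_Suc)
  then show ?thesis unfolding computable_def by force
qed

lemma computable_four_pow: "computable (\<lambda>n. 4 ^ n)"
proof -
  obtain g where g: "recfn 0 g" "g [] = 1" using recfn_one by blast
  obtain F where F: "recfn 2 F" "\<And>a b. F [a, b] = a + b" using recfn_add by blast
  define Q where "Q = (\<lambda>xs. F [F [xs ! 0, xs ! 0], F [xs ! 0, xs ! 0]])"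
  have first: "recfn 2 (\<lambda>xs. xs ! 0)" using rf_proj[of 0 2] by simp
  have double: "recfn 2 (\<lambda>xs. F [xs ! 0, xs ! 0])" by (rule recfn_comp2[OF F(1) first first])
  have "recfn 2 Q" unfolding Q_def by (rule recfn_comp2[OF F(1) double double])
  then have "computable (rec_nat (g []) (\<lambda>k r. Q [r, k]))" by (rule computable_rec_nat[OF g(1)])
  moreover have "rec_nat (g []) (\<lambda>k r. Q [r, k]) = (\<lambda>n. 4 ^ n)"
  proof
    show "rec_nat (g []) (\<lambda>k r. Q [r, k]) n = 4 ^ n" for n
      by (induction n) (simp_all add: g(2) Q_def F(2))
  qed
  ultimately show ?thesis by simp
qed

lemma mixed_graph_edgeD:
  assumes "mixed_graph V E A" "{u, v} \<in> E"
  shows "u \<noteq> v \<and> u \<in> V \<and> v \<in> V"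
  using assms unfolding mixed_graph_def by (metis doubleton_eq_iff)

lemma mixed_graph_trancl_arcD:
  assumes "mixed_graph V E A" "(u, v) \<in> A\<^sup>+"
  shows "u \<in> V \<and> v \<in> V"
  using assms trancl_subset_Sigma[of A V] unfolding mixed_graph_def by auto

lemma mixed_graph_trancl_irrefl: "mixed_graph V E A \<Longrightarrow> (u, u) \<notin> A\<^sup>+"
  unfolding mixed_graph_def acyclic_def by auto

lemma underlying_subset_underlying_closure:
  "underlying E A \<subseteq> underlying (closure_edges E A) (closure_arcs A)"
  unfolding underlying_def closure_edges_def closure_arcs_def by blast

lemma mixed_graph_underlying_closure_edgeD:
  assumes "mixed_graph V E A" "e \<in> underlying (closure_edges E A) (closure_arcs A)"
  obtains u v where "e = {u, v}" "u \<noteq> v" "u \<in> V" "v \<in> V"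
proof -
  have "e \<in> E \<or> (\<exists>u v. e = {u, v} \<and> (u, v) \<in> A\<^sup>+)"
    using assms(2) unfolding underlying_def closure_edges_def closure_arcs_def by blast
  moreover have "(\<exists>u v. e = {u, v} \<and> u \<noteq> v \<and> u \<in> V \<and> v \<in> V)" if "e \<in> E"
    using assms(1) that unfolding mixed_graph_def by blast
  ultimately show ?thesis
    using that mixed_graph_trancl_arcD[OF assms(1)] mixed_graph_trancl_irrefl[OF assms(1)] by metis
qed

lemma mixed_graph_underlying_edgeD:
  assumes "mixed_graph V E A" "e \<in> underlying E A"
  obtains u v where "e = {u, v}" "u \<noteq> v" "u \<in> V" "v \<in> V"
  using mixed_graph_underlying_closure_edgeD[OF assms(1)] assms(2)
    underlying_subset_underlying_closure by blast

lemma mixed_graph_underlying_edge_vertices: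
  assumes "mixed_graph V E A" "{u, v} \<in> underlying E A"
  shows "u \<in> V \<and> v \<in> V"
  using mixed_graph_underlying_edgeD[OF assms] by (metis doubleton_eq_iff)

lemma chromatic_number_le: "proper_coloring V E A k c \<Longrightarrow> chromatic_number V E A \<le> k"
  unfolding chromatic_number_def by (blast intro: Least_le)

lemma mult_add_less_mult_add:
  fixes a b x y k :: nat
  assumes "a < b" "x \<le> k" "0 < y"
  shows "a * k + x < b * k + y"
proof -
  have "a * k + x \<le> Suc a * k" using assms(2) by simp
  also have "\<dots> \<le> b * k" using assms(1) by (intro mult_le_mono1) simp
  finally show ?thesis using assms(3) by simp
qed

lemma proper_coloring_layered:
  assumes mg: "mixed_graph V E A"
    and layer: "\<forall>v\<in>V. layer v < L" and col: "\<forall>v\<in>V. col v \<in> {1..k}"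
    and edges: "\<forall>u v. {u, v} \<in> E \<longrightarrow> layer u = layer v \<longrightarrow> col u \<noteq> col v"
    and arcs: "\<forall>u v. (u, v) \<in> A \<longrightarrow> layer u < layer v \<or> layer u = layer v \<and> col u < col v"
  shows "proper_coloring V E A (L * k) (\<lambda>v. layer v * k + col v)"
proof -
  have col_bounds: "1 \<le> col v" "col v \<le> k" if "v \<in> V" for v using col that by auto
  have less: "layer u * k + col u < layer v * k + col v" if "u \<in> V" "v \<in> V" "layer u < layer v" for u v
    using mult_add_less_mult_add[OF that(3) col_bounds(2)[OF that(1)]] col_bounds(1)[OF that(2)] by simp
  show ?thesis
    unfolding proper_coloring_def
  proof (intro conjI allI impI ballI)
    fix v assume v: "v \<in> V"
    have "layer v * k + col v \<le> Suc (layer v) * k" using col_bounds[OF v] by simp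
    also have "\<dots> \<le> L * k" using layer v by (intro mult_le_mono1) (simp add: Suc_leI)
    finally show "layer v * k + col v \<in> {1..L * k}" using col_bounds[OF v] by simp
  next
    fix u v assume e: "{u, v} \<in> E"
    then have "u \<in> V" "v \<in> V" using mixed_graph_edgeD[OF mg] by auto
    then show "layer u * k + col u \<noteq> layer v * k + col v"
      using edges e less[of u v] less[of v u] by (cases "layer u = layer v") (auto elim: linorder_neqE_nat)
  next
    fix u v assume a: "(u, v) \<in> A"
    then have "u \<in> V" "v \<in> V" using mixed_graph_trancl_arcD[OF mg] by auto
    moreover have "layer u < layer v \<or> layer u = layer v \<and> col u < col v" using arcs a by blast
    ultimately show "layer u * k + col u < layer v * k + col v" using less[of u v] by auto
  qed
qed

section \<open>Vertex cover\<close>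

lemma finite_acyclic_has_maximal:
  assumes "finite S" "S \<noteq> {}" "acyclic r"
  obtains m where "m \<in> S" "\<forall>y\<in>S. (m, y) \<notin> r"
proof -
  have "wf ((r \<inter> S \<times> S)\<inverse>)"
    using assms by (intro finite_acyclic_wf_converse) (auto intro: acyclic_subset)
  then obtain m where "m \<in> S" "\<And>y. (y, m) \<in> (r \<inter> S \<times> S)\<inverse> \<Longrightarrow> y \<notin> S"
    using assms(2) by (metis ex_in_conv wfE_min)
  then show ?thesis using that by blast
qed

lemma finite_acyclic_topological_numbering:
  assumes "finite S" "acyclic r"
  shows "\<exists>p. inj_on p S \<and> p ` S \<subseteq> {1..card S} \<and> (\<forall>x\<in>S. \<forall>y\<in>S. (x, y) \<in> r \<longrightarrow> p x < p y)"
  using assms(1)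
proof (induction S rule: finite_remove_induct)
  case empty
  then show ?case by simp
next
  case (remove S)
  obtain m where m: "m \<in> S" "\<forall>y\<in>S. (m, y) \<notin> r"
    using finite_acyclic_has_maximal[OF remove.hyps(1,2) assms(2)] .
  obtain p where p: "inj_on p (S - {m})" "p ` (S - {m}) \<subseteq> {1..card S - 1}"
    "\<forall>x\<in>S - {m}. \<forall>y\<in>S - {m}. (x, y) \<in> r \<longrightarrow> p x < p y"
    using remove.IH[OF m(1)] remove.hyps(1) m(1) by auto
  have below: "1 \<le> p x \<and> p x < card S" if "x \<in> S" "x \<noteq> m" for x
  proof -
    have "p x \<in> {1..card S - 1}" using p(2) that by blast
    then show ?thesis by auto
  qed
  have "card S \<ge> 1"
    using remove.hyps(1) m(1) by (metis One_nat_def Suc_leI card_gt_0_iff empty_iff)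
  define q where "q = p(m := card S)"
  have "inj_on q S"
    unfolding inj_on_def q_def using p(1) below by (metis DiffI inj_onD less_irrefl fun_upd_apply singletonD)
  moreover have "q ` S \<subseteq> {1..card S}"
    using below \<open>card S \<ge> 1\<close> unfolding q_def by (auto simp: less_imp_le)
  moreover have "q x < q y" if "x \<in> S" "y \<in> S" "(x, y) \<in> r" for x y
  proof -
    have "x \<noteq> m" using m(2) that by blast
    then show ?thesis
      using p(3) below that unfolding q_def by (cases "y = m") auto
  qed
  ultimately show ?case by blast
qed

definition max_number_below :: "('a \<Rightarrow> nat) \<Rightarrow> 'a set \<Rightarrow> ('a \<times> 'a) set \<Rightarrow> 'a \<Rightarrow> nat" where
  "max_number_below p S A v = Max (insert 0 (p ` {s \<in> S. (s, v) \<in> A\<^sup>+}))"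

lemma max_number_below_le:
  "finite S \<Longrightarrow> p ` S \<subseteq> {1..n} \<Longrightarrow> max_number_below p S A v \<le> n"
  unfolding max_number_below_def by (subst Max_le_iff) auto

lemma max_number_below_ge:
  "finite S \<Longrightarrow> s \<in> S \<Longrightarrow> (s, v) \<in> A\<^sup>+ \<Longrightarrow> p s \<le> max_number_below p S A v"
  unfolding max_number_below_def by (intro Max_ge) auto

lemma max_number_below_less:
  assumes "finite S" "0 < n" "\<And>s. s \<in> S \<Longrightarrow> (s, v) \<in> A\<^sup>+ \<Longrightarrow> p s < n"
  shows "max_number_below p S A v < n"
  using assms unfolding max_number_below_def by (subst Max_less_iff) auto

lemma proper_coloring_from_vertex_cover:
  assumes mg: "mixed_graph V E A" and S: "S \<subseteq> V" "\<forall>e\<in>underlying E A. e \<inter> S \<noteq> {}"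
  shows "\<exists>c. proper_coloring V E A (2 * card S + 1) c"
proof -
  have fin: "finite S" using mg S(1) unfolding mixed_graph_def by (meson finite_subset)
  have "acyclic (A\<^sup>+)" using mixed_graph_trancl_irrefl[OF mg] by (simp add: acyclic_def)
  then obtain p where p: "inj_on p S" "p ` S \<subseteq> {1..card S}"
      "\<forall>x\<in>S. \<forall>y\<in>S. (x, y) \<in> A\<^sup>+ \<longrightarrow> p x < p y"
    using finite_acyclic_topological_numbering[OF fin] by blast
  let ?M = "max_number_below p S A"
  have M_less: "?M u < p v" if "(u, v) \<in> A" "v \<in> S" for u v
  proof (rule max_number_below_less[OF fin])
    show "0 < p v" using p(2) that(2) by fastforce
    show "p s < p v" if "s \<in> S" "(s, u) \<in> A\<^sup>+" for s
      using p(3) that trancl_into_trancl[OF _ \<open>(u, v) \<in> A\<close>] \<open>v \<in> S\<close> by blast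
  qed
  have cover: "u \<in> S \<or> v \<in> S" if "{u, v} \<in> underlying E A" for u v
  proof -
    have "{u, v} \<inter> S \<noteq> {}" using S(2) that by blast
    then show ?thesis by blast
  qed
  define c where "c v = (if v \<in> S then 2 * p v else 2 * ?M v + 1)" for v
  have "proper_coloring V E A (2 * card S + 1) c"
    unfolding proper_coloring_def
  proof (intro conjI allI impI ballI)
    fix v
    show "c v \<in> {1..2 * card S + 1}"
      using p(2) max_number_below_le[OF fin p(2)] unfolding c_def by (auto simp: image_subset_iff)
  next
    fix u v assume e: "{u, v} \<in> E"
    then have "u \<noteq> v" using mixed_graph_edgeD[OF mg] by blast
    moreover have "u \<in> S \<or> v \<in> S" using cover e unfolding underlying_def by blast
    ultimately show "c u \<noteq> c v"
      using p(1) unfolding c_def inj_on_def by auto presburger+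
  next
    fix u v assume a: "(u, v) \<in> A"
    then have "u \<in> S \<or> v \<in> S" using cover unfolding underlying_def by blast
    then show "c u < c v"
      using p(3) max_number_below_ge[OF fin _ r_into_trancl[OF a], of p] M_less[OF a] r_into_trancl[OF a]
      unfolding c_def by auto
  qed
  then show ?thesis by blast
qed

lemma chromatic_number_le_vertex_cover:
  assumes mg: "mixed_graph V E A"
  shows "chromatic_number V E A \<le> 2 * vertex_cover_number V (underlying E A) + 1"
proof -
  have "\<forall>e\<in>underlying E A. e \<inter> V \<noteq> {}"
    using mixed_graph_underlying_edgeD[OF mg] by (metis disjoint_iff insertI1)
  then have "\<exists>k S. S \<subseteq> V \<and> card S = k \<and> (\<forall>e\<in>underlying E A. e \<inter> S \<noteq> {})" by blast
  then have "\<exists>S. S \<subseteq> V \<and> card S = vertex_cover_number V (underlying E A) \<and>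
      (\<forall>e\<in>underlying E A. e \<inter> S \<noteq> {})"
    unfolding vertex_cover_number_def by (rule LeastI_ex)
  then obtain S where S: "S \<subseteq> V" "card S = vertex_cover_number V (underlying E A)"
    "\<forall>e\<in>underlying E A. e \<inter> S \<noteq> {}" by blast
  obtain c where "proper_coloring V E A (2 * card S + 1) c"
    using proper_coloring_from_vertex_cover[OF mg S(1,3)] by blast
  then show ?thesis unfolding S(2) by (rule chromatic_number_le)
qed

section \<open>Treedepth\<close>

definition induced_edges :: "'a set set \<Rightarrow> 'a set \<Rightarrow> 'a set set" where
  "induced_edges E W = {e \<in> E. e \<subseteq> W}"

definition induced_arcs :: "('a \<times> 'a) set \<Rightarrow> 'a set \<Rightarrow> ('a \<times> 'a) set" where
  "induced_arcs A W = A \<inter> W \<times> W"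

lemma mixed_graph_induced:
  assumes "mixed_graph V E A" "W \<subseteq> V"
  shows "mixed_graph W (induced_edges E W) (induced_arcs A W)"
  unfolding mixed_graph_def
proof (intro conjI)
  show "finite W" using assms finite_subset unfolding mixed_graph_def by blast
  show "\<forall>e\<in>induced_edges E W. \<exists>u v. e = {u, v} \<and> u \<noteq> v \<and> u \<in> W \<and> v \<in> W"
  proof
    fix e assume "e \<in> induced_edges E W"
    then have "e \<in> E" "e \<subseteq> W" unfolding induced_edges_def by auto
    moreover obtain u v where "e = {u, v}" "u \<noteq> v"
      using assms(1) \<open>e \<in> E\<close> unfolding mixed_graph_def by blast
    ultimately show "\<exists>u v. e = {u, v} \<and> u \<noteq> v \<and> u \<in> W \<and> v \<in> W" by auto
  qed
  have "acyclic A" using assms(1) unfolding mixed_graph_def by simp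
  then show "acyclic (induced_arcs A W)"
    by (rule acyclic_subset) (auto simp: induced_arcs_def)
qed (use assms(1) in \<open>auto simp: mixed_graph_def induced_edges_def induced_arcs_def\<close>)

lemma underlying_induced_subset: "underlying (induced_edges E W) (induced_arcs A W) \<subseteq> underlying E A"
  unfolding underlying_def induced_edges_def induced_arcs_def by blast

lemma proper_coloring_induced_edgeD:
  assumes "proper_coloring W (induced_edges E W) (induced_arcs A W) k c"
    "{u, v} \<in> E" "u \<in> W" "v \<in> W"
  shows "c u \<noteq> c v"
  using assms unfolding proper_coloring_def induced_edges_def by auto

lemma proper_coloring_induced_arcD:
  assumes "proper_coloring W (induced_edges E W) (induced_arcs A W) k c"
    "(u, v) \<in> A" "u \<in> W" "v \<in> W"
  shows "c u < c v"
  using assms unfolding proper_coloring_def induced_arcs_def by auto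

definition forest_roots :: "'a set \<Rightarrow> ('a \<times> 'a) set \<Rightarrow> 'a set" where
  "forest_roots V R = {v \<in> V. \<forall>u. (u, v) \<notin> R}"

definition comparable_on :: "('a \<times> 'a) set \<Rightarrow> 'a set set \<Rightarrow> bool" where
  "comparable_on R E \<longleftrightarrow> (\<forall>u v. {u, v} \<in> E \<longrightarrow> u = v \<or> (u, v) \<in> R \<or> (v, u) \<in> R)"

lemma forest_order_transD: "forest_order V R \<Longrightarrow> (x, y) \<in> R \<Longrightarrow> (y, z) \<in> R \<Longrightarrow> (x, z) \<in> R"
  unfolding forest_order_def by (blast dest: transD)

lemma forest_order_chainD:
  assumes "forest_order V R" "(x, v) \<in> R" "(y, v) \<in> R"
  shows "x = y \<or> (x, y) \<in> R \<or> (y, x) \<in> R"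
proof -
  have "v \<in> V" using assms unfolding forest_order_def by blast
  then show ?thesis using assms unfolding forest_order_def by blast
qed

lemma forest_order_restrict: "forest_order V R \<Longrightarrow> forest_order W (R \<inter> W \<times> W)"
  unfolding forest_order_def trans_def irrefl_def by blast

lemma forest_order_wf:
  assumes "forest_order V R" "finite V"
  shows "wf R"
proof -
  have "R \<subseteq> V \<times> V" "trans R" "irrefl R" using assms(1) unfolding forest_order_def by auto
  then have "finite R" "acyclic R"
    using assms(2) by (auto simp: acyclic_def irrefl_def trancl_id intro: finite_subset)
  then show ?thesis by (rule finite_acyclic_wf)
qed

lemma forest_root_below:
  assumes fo: "forest_order V R" and "finite V" "v \<in> V - forest_roots V R"
  obtains r where "r \<in> forest_roots V R" "(r, v) \<in> R"
proof -
  obtain u where "u \<in> {u. (u, v) \<in> R}" using assms(3) by (auto simp: forest_roots_def)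
  then obtain r where r: "r \<in> {u. (u, v) \<in> R}" "\<And>y. (y, r) \<in> R \<Longrightarrow> y \<notin> {u. (u, v) \<in> R}"
    by (rule wfE_min[OF forest_order_wf[OF fo \<open>finite V\<close>]]) iprover
  have "R \<subseteq> V \<times> V" using fo unfolding forest_order_def by auto
  then have "r \<in> forest_roots V R"
    using r forest_order_transD[OF fo] unfolding forest_roots_def by blast
  then show ?thesis using that r(1) by blast
qed

lemma forest_root_descendant_step:
  assumes fo: "forest_order V R" and r: "r \<in> forest_roots V R"
    and x: "r = x \<or> (r, x) \<in> R" and xy: "(x, y) \<in> R \<or> (y, x) \<in> R"
  shows "r = y \<or> (r, y) \<in> R"
  using xy
proof
  assume "(x, y) \<in> R"
  then show ?thesis using x forest_order_transD[OF fo] by blast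
next
  assume yx: "(y, x) \<in> R"
  have "(y, r) \<notin> R" using r unfolding forest_roots_def by blast
  moreover have "r \<noteq> x" using yx r unfolding forest_roots_def by blast
  ultimately show ?thesis using x forest_order_chainD[OF fo _ yx] by blast
qed

lemma forest_roots_height_decrease:
  assumes fo: "forest_order V R" and "finite V" "v \<in> V - forest_roots V R"
  shows "card {u. (u, v) \<in> R \<inter> (V - forest_roots V R) \<times> (V - forest_roots V R)}
    < card {u. (u, v) \<in> R}"
proof (rule psubset_card_mono)
  show "finite {u. (u, v) \<in> R}"
    using fo \<open>finite V\<close> unfolding forest_order_def by (auto intro: finite_subset)
  obtain r where "r \<in> forest_roots V R" "(r, v) \<in> R" using forest_root_below[OF assms] .
  then show "{u. (u, v) \<in> R \<inter> (V - forest_roots V R) \<times> (V - forest_roots V R)} \<subset> {u. (u, v) \<in> R}"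
    by auto
qed

lemma comparable_on_induced:
  assumes "comparable_on R (underlying E A)"
  shows "comparable_on (R \<inter> W \<times> W) (underlying (induced_edges E W) (induced_arcs A W))"
  unfolding comparable_on_def
proof (intro allI impI)
  fix u v assume uv: "{u, v} \<in> underlying (induced_edges E W) (induced_arcs A W)"
  then have "{u, v} \<subseteq> W"
    unfolding underlying_def induced_edges_def induced_arcs_def by (auto simp: doubleton_eq_iff)
  moreover have "{u, v} \<in> underlying E A" using uv underlying_induced_subset by blast
  ultimately show "u = v \<or> (u, v) \<in> R \<inter> W \<times> W \<or> (v, u) \<in> R \<inter> W \<times> W"
    using assms unfolding comparable_on_def by blast
qed

lemma forest_root_reach:
  assumes mg: "mixed_graph V E A" and fo: "forest_order V R" and cmp: "comparable_on R (underlying E A)"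
    and r: "r \<in> forest_roots V R" and rx: "(r, x) \<in> A\<^sup>+"
  shows "(r, x) \<in> R"
proof -
  have "r = x \<or> (r, x) \<in> R"
    using trancl_into_rtrancl[OF rx]
  proof (induction rule: rtrancl_induct)
    case (step y z)
    then have "{y, z} \<in> underlying E A" "y \<noteq> z"
      using mixed_graph_trancl_irrefl[OF mg] unfolding underlying_def by auto
    then show ?case using step.IH cmp forest_root_descendant_step[OF fo r] unfolding comparable_on_def by blast
  qed simp
  then show ?thesis using rx mixed_graph_trancl_irrefl[OF mg] by auto
qed

lemma forest_roots_unreachable:
  assumes "mixed_graph V E A" "forest_order V R" "comparable_on R (underlying E A)"
    and "r \<in> forest_roots V R" "s \<in> forest_roots V R"
  shows "(s, r) \<notin> A\<^sup>+"
  using forest_root_reach[OF assms(1-3,5)] assms(4) unfolding forest_roots_def by blast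

lemma forest_roots_independent:
  assumes "comparable_on R E'" "u \<in> forest_roots V R" "v \<in> forest_roots V R" "u \<noteq> v"
  shows "{u, v} \<notin> E'"
  using assms unfolding comparable_on_def forest_roots_def by blast

lemma proper_coloring_extend_to_roots:
  assumes mg: "mixed_graph V E A" and fo: "forest_order V R" and cmp: "comparable_on R (underlying E A)"
    and W: "W = V - forest_roots V R"
    and c': "proper_coloring W (induced_edges E W) (induced_arcs A W) k c'" and "0 < k"
  shows "\<exists>c. proper_coloring V E A (4 * k) c"
proof -
  let ?roots = "forest_roots V R"
  define P where "P x \<longleftrightarrow> (\<exists>r\<in>?roots. (x, r) \<in> A\<^sup>+)" for x
  define Q where "Q x \<longleftrightarrow> (\<exists>r\<in>?roots. (r, x) \<in> A\<^sup>+)" for x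
  have not_P_and_Q: "\<not> (P x \<and> Q x)" for x
  proof
    assume "P x \<and> Q x"
    then obtain r s where r: "r \<in> ?roots" and s: "s \<in> ?roots"
      and sx: "(s, x) \<in> A\<^sup>+" and xr: "(x, r) \<in> A\<^sup>+"
      unfolding P_def Q_def by blast
    from sx xr have "(s, r) \<in> A\<^sup>+" by (rule trancl_trans)
    then show False using forest_roots_unreachable[OF mg fo cmp r s] by contradiction
  qed
  define layer :: "nat \<Rightarrow> nat"
    where "layer x = (if x \<in> ?roots then 1 else if P x then 0 else if Q x then 3 else 2)" for x
  define col where "col x = (if x \<in> ?roots then 1 else c' x)" for x
  have "proper_coloring V E A (4 * k) (\<lambda>v. layer v * k + col v)"
  proof (rule proper_coloring_layered[OF mg])
    show "\<forall>v\<in>V. layer v < 4" unfolding layer_def by simp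
    show "\<forall>v\<in>V. col v \<in> {1..k}"
      using c' W \<open>0 < k\<close> unfolding proper_coloring_def col_def by auto
    show "\<forall>u v. {u, v} \<in> E \<longrightarrow> layer u = layer v \<longrightarrow> col u \<noteq> col v"
    proof (intro allI impI)
      fix u v assume e: "{u, v} \<in> E" and "layer u = layer v"
      then have "u \<in> W \<and> v \<in> W \<or> u \<in> ?roots \<and> v \<in> ?roots"
        using mixed_graph_edgeD[OF mg e] W unfolding layer_def by (auto split: if_splits)
      moreover have "{u, v} \<in> underlying E A" using e unfolding underlying_def by blast
      ultimately show "col u \<noteq> col v"
        using proper_coloring_induced_edgeD[OF c' e] forest_roots_independent[OF cmp]
          mixed_graph_edgeD[OF mg e] W unfolding col_def by auto
    qed
    show "\<forall>u v. (u, v) \<in> A \<longrightarrow> layer u < layer v \<or> layer u = layer v \<and> col u < col v"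
    proof (intro allI impI)
      fix u v assume a: "(u, v) \<in> A"
      have "u \<in> V" "v \<in> V" "u \<noteq> v"
        using mixed_graph_trancl_arcD[OF mg] mixed_graph_trancl_irrefl[OF mg] a by blast+
      moreover have "{u, v} \<notin> underlying E A \<or> \<not> (u \<in> ?roots \<and> v \<in> ?roots)"
        using forest_roots_independent[OF cmp] \<open>u \<noteq> v\<close> by blast
      moreover have "{u, v} \<in> underlying E A" using a unfolding underlying_def by blast
      moreover have "P v \<Longrightarrow> P u" "Q u \<Longrightarrow> Q v" "u \<in> ?roots \<Longrightarrow> Q v" "v \<in> ?roots \<Longrightarrow> P u"
        using a unfolding P_def Q_def by (meson r_into_trancl trancl_into_trancl2 trancl_into_trancl)+
      moreover have "u \<in> W \<Longrightarrow> v \<in> W \<Longrightarrow> c' u < c' v"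
        using proper_coloring_induced_arcD[OF c' a] .
      ultimately show "layer u < layer v \<or> layer u = layer v \<and> col u < col v"
        using not_P_and_Q[of u] not_P_and_Q[of v] W unfolding layer_def col_def by auto
    qed
  qed
  then show ?thesis by blast
qed

lemma proper_coloring_from_forest_order:
  assumes "mixed_graph V E A" "forest_order V R" "comparable_on R (underlying E A)"
    "\<forall>v\<in>V. card {u. (u, v) \<in> R} + 1 \<le> d"
  shows "\<exists>c. proper_coloring V E A (4 ^ d) c"
  using assms
proof (induction d arbitrary: V E A R)
  case 0
  then have "V = {}" by auto
  then have "proper_coloring V E A 1 (\<lambda>_. 1)"
    using mixed_graph_edgeD[OF "0.prems"(1)] mixed_graph_trancl_arcD[OF "0.prems"(1)]
    unfolding proper_coloring_def by blast
  then show ?case by auto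
next
  case (Suc d)
  define W where "W = V - forest_roots V R"
  have "finite V" using Suc.prems(1) unfolding mixed_graph_def by simp
  have "mixed_graph W (induced_edges E W) (induced_arcs A W)"
    using mixed_graph_induced[OF Suc.prems(1)] unfolding W_def by blast
  moreover have "forest_order W (R \<inter> W \<times> W)"
    using forest_order_restrict[OF Suc.prems(2)] .
  moreover have "comparable_on (R \<inter> W \<times> W) (underlying (induced_edges E W) (induced_arcs A W))"
    using comparable_on_induced[OF Suc.prems(3)] .
  moreover have "\<forall>v\<in>W. card {u. (u, v) \<in> R \<inter> W \<times> W} + 1 \<le> d"
    using forest_roots_height_decrease[OF Suc.prems(2) \<open>finite V\<close>] Suc.prems(4)
    unfolding W_def by fastforce
  ultimately obtain c' where "proper_coloring W (induced_edges E W) (induced_arcs A W) (4 ^ d) c'"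
    using Suc.IH by blast
  then have "\<exists>c. proper_coloring V E A (4 * 4 ^ d) c"
    using proper_coloring_extend_to_roots[OF Suc.prems(1-3) W_def] by simp
  then show ?case by simp
qed

lemma treedepth_witness:
  assumes "finite V" "\<forall>u v. {u, v} \<in> E \<longrightarrow> u \<in> V \<and> v \<in> V"
  obtains R where "forest_order V R" "comparable_on R E"
    "\<forall>v\<in>V. card {u. (u, v) \<in> R} + 1 \<le> treedepth V E"
proof -
  define R where "R = {(u, v). u \<in> V \<and> v \<in> V \<and> u < v}"
  have "forest_order V R" unfolding forest_order_def R_def trans_def irrefl_def by auto
  moreover have "comparable_on R E"
    using assms(2) unfolding comparable_on_def R_def by auto
  moreover have "card {u. (u, v) \<in> R} + 1 \<le> card V" if "v \<in> V" for v
  proof -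
    have "{u. (u, v) \<in> R} \<subset> V" using that unfolding R_def by auto
    then have "card {u. (u, v) \<in> R} < card V" using assms(1) by (rule psubset_card_mono[rotated])
    then show ?thesis by simp
  qed
  ultimately have "\<exists>h R. forest_order V R \<and> comparable_on R E \<and> (\<forall>v\<in>V. card {u. (u, v) \<in> R} + 1 \<le> h)"
    by blast
  then have "\<exists>R. forest_order V R \<and> comparable_on R E \<and>
      (\<forall>v\<in>V. card {u. (u, v) \<in> R} + 1 \<le> treedepth V E)"
    unfolding treedepth_def comparable_on_def by (rule LeastI_ex)
  then show ?thesis using that by blast
qed

lemma chromatic_number_le_treedepth:
  assumes mg: "mixed_graph V E A"
  shows "chromatic_number V E A \<le> 4 ^ treedepth V (underlying E A)"
proof -
  have "finite V" using mg unfolding mixed_graph_def by simp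
  then obtain R where "forest_order V R" "comparable_on R (underlying E A)"
    "\<forall>v\<in>V. card {u. (u, v) \<in> R} + 1 \<le> treedepth V (underlying E A)"
    using treedepth_witness mixed_graph_underlying_edge_vertices[OF mg] by metis
  then obtain c where "proper_coloring V E A (4 ^ treedepth V (underlying E A)) c"
    using proper_coloring_from_forest_order[OF mg] by blast
  then show ?thesis by (rule chromatic_number_le)
qed

section \<open>Degeneracy of graphs of bounded treewidth\<close>

definition graph_path :: "'a set \<Rightarrow> 'a set set \<Rightarrow> 'a list \<Rightarrow> bool" where
  "graph_path T TE ps \<longleftrightarrow> ps \<noteq> [] \<and> distinct ps \<and> set ps \<subseteq> T \<and>
     (\<forall>i. Suc i < length ps \<longrightarrow> {ps ! i, ps ! Suc i} \<in> TE)"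

definition graph_cycle :: "'a set \<Rightarrow> 'a set set \<Rightarrow> 'a list \<Rightarrow> bool" where
  "graph_cycle T TE cs \<longleftrightarrow> 3 \<le> length cs \<and> distinct cs \<and> set cs \<subseteq> T \<and>
     (\<forall>i < length cs. {cs ! i, cs ! ((i + 1) mod length cs)} \<in> TE)"

definition is_leaf :: "'a set set \<Rightarrow> 'a \<Rightarrow> bool" where
  "is_leaf TE t \<longleftrightarrow> (\<forall>y z. {t, y} \<in> TE \<longrightarrow> {t, z} \<in> TE \<longrightarrow> y = z)"

lemma tree_graph_no_cycle: "tree_graph T TE \<Longrightarrow> \<not> graph_cycle T TE cs"
  unfolding tree_graph_def graph_cycle_def by blast

lemma tree_graph_edgeD: "tree_graph T TE \<Longrightarrow> {x, y} \<in> TE \<Longrightarrow> x \<noteq> y \<and> x \<in> T \<and> y \<in> T"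
  unfolding tree_graph_def by (metis doubleton_eq_iff)

lemma graph_path_closing_edge:
  assumes ps: "graph_path T TE ps" and j: "2 \<le> j" "j < length ps" and e: "{ps ! 0, ps ! j} \<in> TE"
  shows "graph_cycle T TE (take (Suc j) ps)"
  unfolding graph_cycle_def
proof (intro conjI allI impI)
  let ?cs = "take (Suc j) ps"
  have len: "length ?cs = Suc j" using j by simp
  show "3 \<le> length ?cs" "distinct ?cs" "set ?cs \<subseteq> T"
    using ps len j unfolding graph_path_def by (auto dest: in_set_takeD)
  fix i assume i: "i < length ?cs"
  show "{?cs ! i, ?cs ! ((i + 1) mod length ?cs)} \<in> TE"
  proof (cases "i = j")
    case True
    then show ?thesis using e len by (simp add: insert_commute)
  next
    case False
    then show ?thesis using ps i len j unfolding graph_path_def by simp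
  qed
qed

lemma tree_graph_has_leaf:
  assumes tg: "tree_graph T TE"
  obtains t where "t \<in> T" "is_leaf TE t"
proof -
  have fin: "finite T" and "T \<noteq> {}" using tg unfolding tree_graph_def connected_in_def by auto
  then obtain t0 where "graph_path T TE [t0]" unfolding graph_path_def by auto
  moreover have "length ps < Suc (card T)" if "graph_path T TE ps" for ps
  proof -
    have "length ps = card (set ps)" using that unfolding graph_path_def by (simp add: distinct_card)
    also have "\<dots> \<le> card T" using that fin unfolding graph_path_def by (simp add: card_mono)
    finally show ?thesis by simp
  qed
  ultimately have "\<exists>ps. graph_path T TE ps \<and> (\<forall>qs. graph_path T TE qs \<longrightarrow> length qs \<le> length ps)"
    by (intro ex_has_greatest_nat) auto
  then obtain ps where ps: "graph_path T TE ps"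
    and longest: "\<And>qs. graph_path T TE qs \<Longrightarrow> length qs \<le> length ps"
    by blast
  \<comment> \<open>the first vertex of a longest path is a leaf\<close>
  have neighbour: "y = ps ! 1" if "{ps ! 0, y} \<in> TE" for y
  proof (cases "y \<in> set ps")
    case False
    have "graph_path T TE (y # ps)"
      unfolding graph_path_def
    proof (intro conjI allI impI)
      show "y # ps \<noteq> []" "distinct (y # ps)" "set (y # ps) \<subseteq> T"
        using ps False tree_graph_edgeD[OF tg that] unfolding graph_path_def by auto
      fix i assume "Suc i < length (y # ps)"
      then show "{(y # ps) ! i, (y # ps) ! Suc i} \<in> TE"
        using ps that unfolding graph_path_def by (cases i) (auto simp: insert_commute)
    qed
    then show ?thesis using longest by fastforce
  next
    case True
    then obtain j where j: "j < length ps" "y = ps ! j" by (auto simp: in_set_conv_nth)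
    have "j \<noteq> 0" using tree_graph_edgeD[OF tg that] j by (metis)
    moreover have "\<not> 2 \<le> j"
      using graph_path_closing_edge[OF ps _ j(1)] that j(2) tree_graph_no_cycle[OF tg] by blast
    ultimately have "j = 1" by simp
    then show ?thesis using j by simp
  qed
  have "ps ! 0 \<in> T" using ps unfolding graph_path_def by (auto simp: subset_iff)
  moreover have "is_leaf TE (ps ! 0)" using neighbour unfolding is_leaf_def by blast
  ultimately show ?thesis using that by blast
qed

lemma connected_in_neighbour:
  assumes "connected_in TE S" "t \<in> S" "s \<in> S" "s \<noteq> t"
  obtains y where "y \<in> S" "{t, y} \<in> TE"
proof -
  have "(t, s) \<in> (adj_in TE S)\<^sup>*" using assms unfolding connected_in_def by blast
  then show ?thesis using assms(4) that
    by (cases rule: converse_rtranclE) (auto simp: adj_in_def)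
qed

lemma connected_in_delete_vertex:
  assumes "t \<notin> S"
  shows "connected_in {e \<in> TE. t \<notin> e} S \<longleftrightarrow> connected_in TE S"
proof -
  have "adj_in {e \<in> TE. t \<notin> e} S = adj_in TE S" using assms unfolding adj_in_def by auto
  then show ?thesis unfolding connected_in_def by simp
qed

lemma connected_in_remove_leaf:
  assumes conn: "connected_in TE S" and t: "t \<in> S" and ne: "S - {t} \<noteq> {}" and leaf: "is_leaf TE t"
  shows "connected_in TE (S - {t})"
  unfolding connected_in_def
proof (intro conjI ballI)
  show "S - {t} \<noteq> {}" by (rule ne)
  fix u v assume u: "u \<in> S - {t}" and v: "v \<in> S - {t}"
  let ?reach = "\<lambda>x. (u, x) \<in> (adj_in TE (S - {t}))\<^sup>*"
  have "(u, v) \<in> (adj_in TE S)\<^sup>*" using conn u v unfolding connected_in_def by blast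
  \<comment> \<open>a walk can only enter and leave the leaf t through its unique neighbour\<close>
  then have "(v \<noteq> t \<longrightarrow> ?reach v) \<and> (v = t \<longrightarrow> (\<forall>y\<in>S - {t}. {t, y} \<in> TE \<longrightarrow> ?reach y))"
  proof (induction rule: rtrancl_induct)
    case base
    then show ?case using u by simp
  next
    case (step x y)
    have xy: "x \<in> S" "y \<in> S" "{x, y} \<in> TE" using step.hyps(2) unfolding adj_in_def by auto
    consider "x \<noteq> t" "y \<noteq> t" | "x \<noteq> t" "y = t" | "x = t" by blast
    then show ?case
    proof cases
      case 1
      then have "(x, y) \<in> adj_in TE (S - {t})" using xy unfolding adj_in_def by auto
      then show ?thesis using 1 step.IH by (simp add: rtrancl_into_rtrancl)
    next
      case 2
      have "z = x" if "{t, z} \<in> TE" for z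
        using leaf xy(3) 2 that unfolding is_leaf_def by (metis insert_commute)
      then show ?thesis using 2 step.IH by auto
    next
      case 3
      then show ?thesis using step.IH xy by auto
    qed
  qed
  then show "?reach v" using v by simp
qed

lemma tree_graph_delete_leaf:
  assumes tg: "tree_graph T TE" and t: "t \<in> T" "is_leaf TE t" and "T \<noteq> {t}"
  shows "tree_graph (T - {t}) {e \<in> TE. t \<notin> e}"
  unfolding tree_graph_def
proof (intro conjI)
  show "finite (T - {t})" using tg unfolding tree_graph_def by simp
  show "\<forall>e\<in>{e \<in> TE. t \<notin> e}. \<exists>u v. e = {u, v} \<and> u \<noteq> v \<and> u \<in> T - {t} \<and> v \<in> T - {t}"
    using tg unfolding tree_graph_def by fastforce
  have "T - {t} \<noteq> {}" using t(1) \<open>T \<noteq> {t}\<close> by blast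
  then show "connected_in {e \<in> TE. t \<notin> e} (T - {t})"
    using connected_in_remove_leaf[OF _ t(1) _ t(2)] connected_in_delete_vertex[of t "T - {t}" TE] tg
    unfolding tree_graph_def by blast
  show "\<not> (\<exists>cs. 3 \<le> length cs \<and> distinct cs \<and> set cs \<subseteq> T - {t} \<and>
      (\<forall>i<length cs. {cs ! i, cs ! ((i + 1) mod length cs)} \<in> {e \<in> TE. t \<notin> e}))"
    using tg unfolding tree_graph_def by blast
qed

lemma tree_decomposition_edge_covered:
  "tree_decomposition V K T TE B \<Longrightarrow> e \<in> K \<Longrightarrow> \<exists>t\<in>T. e \<subseteq> B t"
  unfolding tree_decomposition_def by simp

lemma tree_decomposition_vertex_covered:
  "tree_decomposition V K T TE B \<Longrightarrow> v \<in> V \<Longrightarrow> \<exists>t\<in>T. v \<in> B t"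
  unfolding tree_decomposition_def by simp

lemma tree_decomposition_bag_subset:
  "tree_decomposition V K T TE B \<Longrightarrow> t \<in> T \<Longrightarrow> B t \<subseteq> V"
  unfolding tree_decomposition_def by simp

lemma tree_decomposition_connected:
  "tree_decomposition V K T TE B \<Longrightarrow> v \<in> V \<Longrightarrow> connected_in TE {t \<in> T. v \<in> B t}"
  unfolding tree_decomposition_def by simp

lemma tree_decomposition_edge_subset:
  "tree_decomposition V K T TE B \<Longrightarrow> e \<in> K \<Longrightarrow> e \<subseteq> V"
  using tree_decomposition_edge_covered tree_decomposition_bag_subset by blast

lemma leaf_bag_subset_neighbour:
  assumes td: "tree_decomposition V K T TE B" and t: "t \<in> T" "is_leaf TE t" and t': "{t, t'} \<in> TE"
    and shared: "\<forall>v\<in>B t. \<exists>s\<in>T. s \<noteq> t \<and> v \<in> B s"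
  shows "B t \<subseteq> B t'"
proof
  fix v assume v: "v \<in> B t"
  obtain s where s: "s \<in> T" "s \<noteq> t" "v \<in> B s" using shared v by blast
  have "v \<in> V" using tree_decomposition_bag_subset[OF td t(1)] v by blast
  then have "connected_in TE {s \<in> T. v \<in> B s}" by (rule tree_decomposition_connected[OF td])
  then obtain y where "y \<in> {s \<in> T. v \<in> B s}" "{t, y} \<in> TE"
    using connected_in_neighbour[of TE _ t s] s t(1) v by blast
  then show "v \<in> B t'" using t(2) t' unfolding is_leaf_def by blast
qed

lemma tree_decomposition_delete_leaf:
  assumes td: "tree_decomposition V K T TE B" and t: "t \<in> T" "is_leaf TE t" and other: "s \<in> T" "s \<noteq> t"
    and shared: "\<forall>v\<in>B t. \<exists>s\<in>T. s \<noteq> t \<and> v \<in> B s"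
  shows "tree_decomposition V K (T - {t}) {e \<in> TE. t \<notin> e} B"
proof -
  have tg: "tree_graph T TE" using td unfolding tree_decomposition_def by simp
  obtain t' where t': "t' \<in> T" "{t, t'} \<in> TE"
    using connected_in_neighbour[OF _ t(1) other] tg unfolding tree_graph_def by blast
  have "t' \<noteq> t" using tree_graph_edgeD[OF tg t'(2)] by blast
  have sub: "B t \<subseteq> B t'" using leaf_bag_subset_neighbour[OF td t t'(2) shared] .
  have moved: "\<exists>s\<in>T - {t}. X \<subseteq> B s" if "\<exists>s\<in>T. X \<subseteq> B s" for X
    using that sub t'(1) \<open>t' \<noteq> t\<close> by (metis Diff_iff singletonD subset_trans)
  show ?thesis
    unfolding tree_decomposition_def
  proof (intro conjI ballI)
    show "tree_graph (T - {t}) {e \<in> TE. t \<notin> e}" using tree_graph_delete_leaf[OF tg t] other by blast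
    fix v assume v: "v \<in> V"
    have "\<exists>s\<in>T. {v} \<subseteq> B s" using tree_decomposition_vertex_covered[OF td v] by blast
    then show "\<exists>s\<in>T - {t}. v \<in> B s" using moved by blast
    have conn: "connected_in TE {s \<in> T. v \<in> B s}" by (rule tree_decomposition_connected[OF td v])
    show "connected_in {e \<in> TE. t \<notin> e} {s \<in> T - {t}. v \<in> B s}"
    proof (cases "v \<in> B t")
      case True
      have "t' \<in> {s \<in> T. v \<in> B s} - {t}" using True sub t'(1) \<open>t' \<noteq> t\<close> by blast
      then have "connected_in TE ({s \<in> T. v \<in> B s} - {t})"
        using connected_in_remove_leaf[OF conn _ _ t(2)] True t(1) by blast
      moreover have "{s \<in> T - {t}. v \<in> B s} = {s \<in> T. v \<in> B s} - {t}" by blast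
      ultimately show ?thesis using connected_in_delete_vertex[of t "{s \<in> T. v \<in> B s} - {t}"] by simp
    next
      case False
      then have "{s \<in> T - {t}. v \<in> B s} = {s \<in> T. v \<in> B s}" by blast
      moreover have "t \<notin> {s \<in> T. v \<in> B s}" using False by blast
      ultimately show ?thesis using conn connected_in_delete_vertex by metis
    qed
  next
    fix e assume "e \<in> K"
    then show "\<exists>s\<in>T - {t}. e \<subseteq> B s" using moved tree_decomposition_edge_covered[OF td] by blast
  qed (use tree_decomposition_bag_subset[OF td] in blast)
qed

lemma tree_decomposition_low_degree_vertex:
  assumes "tree_decomposition V K T TE B" "\<forall>t\<in>T. card (B t) \<le> k" "finite V" "V \<noteq> {}"
  shows "\<exists>v\<in>V. card {u. {u, v} \<in> K \<and> u \<noteq> v} < k"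
  using assms(1,2)
proof (induction "card T" arbitrary: T TE rule: less_induct)
  case less
  note td = less.prems(1)
  have tg: "tree_graph T TE" using td unfolding tree_decomposition_def by simp
  obtain t where t: "t \<in> T" "is_leaf TE t" using tree_graph_has_leaf[OF tg] .
  have fin_bag: "finite (B t)" using tree_decomposition_bag_subset[OF td t(1)] assms(3) finite_subset by blast
  show ?case
  proof (cases "\<forall>v\<in>B t. \<exists>s\<in>T. s \<noteq> t \<and> v \<in> B s")
    case False
    then obtain v where v: "v \<in> B t" "\<And>s. s \<in> T \<Longrightarrow> v \<in> B s \<Longrightarrow> s = t" by blast
    have "{u. {u, v} \<in> K \<and> u \<noteq> v} \<subseteq> B t - {v}"
      using tree_decomposition_edge_covered[OF td] v by blast
    then have "card {u. {u, v} \<in> K \<and> u \<noteq> v} < card (B t)"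
      using fin_bag v(1) by (meson card_mono finite_Diff card_Diff1_less le_less_trans)
    moreover have "card (B t) \<le> k" using less.prems(2) t(1) by blast
    moreover have "v \<in> V" using tree_decomposition_bag_subset[OF td t(1)] v(1) by blast
    ultimately show ?thesis by (meson less_le_trans)
  next
    case True
    obtain v where "v \<in> V" using assms(4) by blast
    then obtain s where s: "s \<in> T" "s \<noteq> t"
      using tree_decomposition_vertex_covered[OF td] True by metis
    have "tree_decomposition V K (T - {t}) {e \<in> TE. t \<notin> e} B"
      using tree_decomposition_delete_leaf[OF td t s True] .
    moreover have "card (T - {t}) < card T"
    proof (rule card_Diff1_less)
      show "finite T" using tg unfolding tree_graph_def by simp
    qed (rule t(1))
    ultimately show ?thesis using less.hyps less.prems(2) by blast
  qed
qed

lemma tree_decomposition_delete_vertex: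
  assumes td: "tree_decomposition V K T TE B"
  shows "tree_decomposition (V - {v}) (induced_edges K (V - {v})) T TE (\<lambda>t. B t - {v})"
  unfolding tree_decomposition_def
proof (intro conjI ballI)
  show "tree_graph T TE" using td unfolding tree_decomposition_def by simp
  fix u assume u: "u \<in> V - {v}"
  show "\<exists>t\<in>T. u \<in> B t - {v}" using tree_decomposition_vertex_covered[OF td] u by blast
  have "{t \<in> T. u \<in> B t - {v}} = {t \<in> T. u \<in> B t}" using u by blast
  then show "connected_in TE {t \<in> T. u \<in> B t - {v}}"
    using tree_decomposition_connected[OF td] u by simp
next
  fix e assume "e \<in> induced_edges K (V - {v})"
  then show "\<exists>t\<in>T. e \<subseteq> B t - {v}"
    using tree_decomposition_edge_covered[OF td] unfolding induced_edges_def by blast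
qed (use tree_decomposition_bag_subset[OF td] in blast)

lemma coloring_extend_low_degree_vertex:
  assumes col: "\<forall>x\<in>V - {v}. col x \<in> {1..k}"
    "\<forall>x y. {x, y} \<in> induced_edges K (V - {v}) \<longrightarrow> x \<noteq> y \<longrightarrow> col x \<noteq> col y"
    and K: "\<forall>e\<in>K. e \<subseteq> V" and "finite V" and low: "card {u. {u, v} \<in> K \<and> u \<noteq> v} < k"
  shows "\<exists>col'. (\<forall>x\<in>V. col' x \<in> {1..k}) \<and> (\<forall>x y. {x, y} \<in> K \<longrightarrow> x \<noteq> y \<longrightarrow> col' x \<noteq> col' y)"
proof -
  define N where "N = {u. {u, v} \<in> K \<and> u \<noteq> v}"
  have "N \<subseteq> V" using K unfolding N_def by blast
  then have "finite N" using \<open>finite V\<close> by (rule finite_subset)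
  then have "card (col ` N) < card {1..k}" using low card_image_le le_less_trans unfolding N_def by fastforce
  then have "\<not> {1..k} \<subseteq> col ` N" using \<open>finite N\<close> by (meson card_mono finite_imageI not_le)
  then obtain a where a: "a \<in> {1..k}" "a \<notin> col ` N" by blast
  define col' where "col' = col(v := a)"
  have "col' x \<noteq> col' y" if e: "{x, y} \<in> K" and "x \<noteq> y" for x y
  proof -
    have "{x, y} \<subseteq> V" using K e by blast
    then consider "x = v" | "y = v" | "{x, y} \<in> induced_edges K (V - {v})"
      using e unfolding induced_edges_def by auto
    then show ?thesis
    proof cases
      case 1
      then have "y \<in> N" using e \<open>x \<noteq> y\<close> unfolding N_def by (simp add: insert_commute)
      then show ?thesis using 1 a \<open>x \<noteq> y\<close> unfolding col'_def by auto
    next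
      case 2
      then have "x \<in> N" using e \<open>x \<noteq> y\<close> unfolding N_def by simp
      then show ?thesis using 2 a \<open>x \<noteq> y\<close> unfolding col'_def by auto
    next
      case 3
      then show ?thesis using col(2) \<open>x \<noteq> y\<close> unfolding col'_def induced_edges_def by auto
    qed
  qed
  moreover have "\<forall>x\<in>V. col' x \<in> {1..k}" using col(1) a(1) unfolding col'_def by simp
  ultimately show ?thesis by blast
qed

lemma tree_decomposition_coloring:
  assumes "tree_decomposition V K T TE B" "\<forall>t\<in>T. card (B t) \<le> k" "finite V"
  shows "\<exists>col. (\<forall>v\<in>V. col v \<in> {1..k}) \<and> (\<forall>u w. {u, w} \<in> K \<longrightarrow> u \<noteq> w \<longrightarrow> col u \<noteq> col w)"
  using assms
proof (induction "card V" arbitrary: V K B rule: less_induct)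
  case less
  note td = less.prems(1)
  show ?case
  proof (cases "V = {}")
    case True
    then show ?thesis using tree_decomposition_edge_subset[OF td] by fastforce
  next
    case False
    obtain v where v: "v \<in> V" "card {u. {u, v} \<in> K \<and> u \<noteq> v} < k"
      using tree_decomposition_low_degree_vertex[OF td less.prems(2,3) False] by blast
    have "card (V - {v}) < card V" using less.prems(3) v(1) by (rule card_Diff1_less)
    moreover have "tree_decomposition (V - {v}) (induced_edges K (V - {v})) T TE (\<lambda>t. B t - {v})"
      by (rule tree_decomposition_delete_vertex[OF td])
    moreover have "\<forall>t\<in>T. card (B t - {v}) \<le> k"
      using less.prems(2) by (meson card_Diff1_le dual_order.trans)
    moreover have "finite (V - {v})" using less.prems(3) by simp
    ultimately have "\<exists>col. (\<forall>x\<in>V - {v}. col x \<in> {1..k}) \<and>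
        (\<forall>x y. {x, y} \<in> induced_edges K (V - {v}) \<longrightarrow> x \<noteq> y \<longrightarrow> col x \<noteq> col y)"
      by (rule less.hyps)
    then obtain col where col: "\<forall>x\<in>V - {v}. col x \<in> {1..k}"
        "\<forall>x y. {x, y} \<in> induced_edges K (V - {v}) \<longrightarrow> x \<noteq> y \<longrightarrow> col x \<noteq> col y"
      by blast
    have "\<forall>e\<in>K. e \<subseteq> V" using tree_decomposition_edge_subset[OF td] by blast
    then show ?thesis by (rule coloring_extend_low_degree_vertex[OF col _ less.prems(3) v(2)])
  qed
qed

section \<open>Treewidth of the transitive closure\<close>

definition ancestor_colors :: "('a \<Rightarrow> nat) \<Rightarrow> ('a \<times> 'a) set \<Rightarrow> 'a \<Rightarrow> nat" where
  "ancestor_colors col A v = card (col ` {u. (u, v) \<in> A\<^sup>+})"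

lemma mixed_graph_finite_ancestors:
  assumes "mixed_graph V E A"
  shows "finite {u. (u, v) \<in> A\<^sup>+}"
proof (rule finite_subset)
  show "{u. (u, v) \<in> A\<^sup>+} \<subseteq> V" using mixed_graph_trancl_arcD[OF assms] by blast
  show "finite V" using assms unfolding mixed_graph_def by simp
qed

lemma ancestor_colors_less:
  assumes mg: "mixed_graph V E A" and col_range: "\<forall>v\<in>V. col v \<in> {1..k}"
    and chains: "\<forall>x y. (x, y) \<in> A\<^sup>+ \<longrightarrow> col x \<noteq> col y" and v: "v \<in> V"
  shows "ancestor_colors col A v < k"
proof -
  have "col ` {u. (u, v) \<in> A\<^sup>+} \<subseteq> {1..k} - {col v}"
    using col_range chains mixed_graph_trancl_arcD[OF mg] by fastforce
  then have "ancestor_colors col A v \<le> card ({1..k} - {col v})"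
    unfolding ancestor_colors_def by (simp add: card_mono)
  also have "\<dots> < k" using col_range v by fastforce
  finally show ?thesis .
qed

lemma ancestor_colors_strict_mono:
  assumes mg: "mixed_graph V E A" and chains: "\<forall>x y. (x, y) \<in> A\<^sup>+ \<longrightarrow> col x \<noteq> col y"
    and uv: "(u, v) \<in> A\<^sup>+"
  shows "ancestor_colors col A u < ancestor_colors col A v"
proof -
  have "col ` {w. (w, u) \<in> A\<^sup>+} \<subseteq> col ` {w. (w, v) \<in> A\<^sup>+}" using uv by (auto intro: trancl_trans)
  moreover have "col u \<in> col ` {w. (w, v) \<in> A\<^sup>+}" using uv by blast
  moreover have "col u \<notin> col ` {w. (w, u) \<in> A\<^sup>+}" using chains by fastforce
  ultimately have "col ` {w. (w, u) \<in> A\<^sup>+} \<subset> col ` {w. (w, v) \<in> A\<^sup>+}" by blast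
  then show ?thesis
    unfolding ancestor_colors_def using mixed_graph_finite_ancestors[OF mg] by (simp add: psubset_card_mono)
qed

lemma proper_coloring_from_closure_coloring:
  assumes mg: "mixed_graph V E A" and col_range: "\<forall>v\<in>V. col v \<in> {1..k}"
    and col_proper: "\<forall>u w. {u, w} \<in> underlying (closure_edges E A) (closure_arcs A) \<longrightarrow> u \<noteq> w \<longrightarrow> col u \<noteq> col w"
  shows "\<exists>c. proper_coloring V E A (k * k) c"
proof -
  have chains: "\<forall>x y. (x, y) \<in> A\<^sup>+ \<longrightarrow> col x \<noteq> col y"
  proof (intro allI impI)
    fix x y assume "(x, y) \<in> A\<^sup>+"
    moreover from this have "{x, y} \<in> underlying (closure_edges E A) (closure_arcs A)"
      unfolding underlying_def closure_arcs_def by blast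
    ultimately show "col x \<noteq> col y" using col_proper mixed_graph_trancl_irrefl[OF mg] by metis
  qed
  let ?h = "ancestor_colors col A"
  have "proper_coloring V E A (k * k) (\<lambda>v. ?h v * k + col v)"
  proof (rule proper_coloring_layered[OF mg _ col_range])
    show "\<forall>v\<in>V. ?h v < k" using ancestor_colors_less[OF mg col_range chains] by blast
    show "\<forall>u v. {u, v} \<in> E \<longrightarrow> ?h u = ?h v \<longrightarrow> col u \<noteq> col v"
    proof (intro allI impI)
      fix u v assume e: "{u, v} \<in> E" and "?h u = ?h v"
      then have "(u, v) \<notin> A\<^sup>+" "(v, u) \<notin> A\<^sup>+"
        using ancestor_colors_strict_mono[OF mg chains] by fastforce+
      then have "{u, v} \<in> closure_edges E A"
        using e unfolding closure_edges_def by (auto simp: doubleton_eq_iff)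
      then show "col u \<noteq> col v"
        using col_proper mixed_graph_edgeD[OF mg e] unfolding underlying_def by blast
    qed
    show "\<forall>u v. (u, v) \<in> A \<longrightarrow> ?h u < ?h v \<or> ?h u = ?h v \<and> col u < col v"
      using ancestor_colors_strict_mono[OF mg chains] by blast
  qed
  then show ?thesis by blast
qed

lemma tree_graph_singleton: "tree_graph {t} {}"
  unfolding tree_graph_def connected_in_def
proof (intro conjI notI)
  assume "\<exists>cs. 3 \<le> length cs \<and> distinct cs \<and> set cs \<subseteq> {t} \<and>
      (\<forall>i<length cs. {cs ! i, cs ! ((i + 1) mod length cs)} \<in> {})"
  then obtain cs where "3 \<le> length cs" "distinct cs" "set cs \<subseteq> {t}" by blast
  moreover from this have "length cs \<le> 1"
    using card_mono[of "{t}" "set cs"] by (simp add: distinct_card)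
  ultimately show False by simp
qed auto

lemma treewidth_witness:
  assumes "finite V" "\<forall>e\<in>K. e \<subseteq> V"
  obtains T TE B where "tree_decomposition V K T TE B" "\<forall>t\<in>T. card (B t) \<le> treewidth V K + 1"
proof -
  have "tree_decomposition V K {0} {} (\<lambda>_. V)"
    using tree_graph_singleton assms(2) unfolding tree_decomposition_def connected_in_def by auto
  then have "\<exists>w T TE B. tree_decomposition V K T TE B \<and> decomposition_width T B = w" by blast
  then have "\<exists>T TE B. tree_decomposition V K T TE B \<and> decomposition_width T B = treewidth V K"
    unfolding treewidth_def by (rule LeastI_ex)
  then obtain T TE B where td: "tree_decomposition V K T TE B"
    and width: "decomposition_width T B = treewidth V K" by blast
  have "finite T" using td unfolding tree_decomposition_def tree_graph_def by simp
  then have "card (B t) \<le> Max ((\<lambda>t. card (B t)) ` T)" if "t \<in> T" for t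
    using that by simp
  then have "card (B t) \<le> treewidth V K + 1" if "t \<in> T" for t
    using that width unfolding decomposition_width_def by fastforce
  then show ?thesis using that td by blast
qed

lemma Suc_square_le_four_pow: "Suc n * Suc n \<le> 4 ^ n"
proof (induction n)
  case (Suc n)
  have "Suc (Suc n) * Suc (Suc n) \<le> 4 * (Suc n * Suc n)" by simp
  also have "\<dots> \<le> 4 * 4 ^ n" using Suc.IH by simp
  finally show ?case by simp
qed simp

lemma chromatic_number_le_treewidth:
  assumes mg: "mixed_graph V E A"
  shows "chromatic_number V E A \<le> 4 ^ treewidth V (underlying (closure_edges E A) (closure_arcs A))"
proof -
  define K where "K = underlying (closure_edges E A) (closure_arcs A)"
  define w where "w = treewidth V K"
  have "finite V" using mg unfolding mixed_graph_def by simp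
  moreover have "\<forall>e\<in>K. e \<subseteq> V"
    using mixed_graph_underlying_closure_edgeD[OF mg] unfolding K_def by (metis empty_subsetI insert_subset)
  ultimately obtain T TE B where "tree_decomposition V K T TE B" "\<forall>t\<in>T. card (B t) \<le> w + 1"
    using treewidth_witness unfolding w_def by blast
  then obtain col where "\<forall>v\<in>V. col v \<in> {1..w + 1}" "\<forall>u x. {u, x} \<in> K \<longrightarrow> u \<noteq> x \<longrightarrow> col u \<noteq> col x"
    using tree_decomposition_coloring \<open>finite V\<close> by blast
  then obtain c where "proper_coloring V E A ((w + 1) * (w + 1)) c"
    using proper_coloring_from_closure_coloring[OF mg] unfolding K_def by blast
  then have "chromatic_number V E A \<le> (w + 1) * (w + 1)" by (rule chromatic_number_le)
  also have "\<dots> \<le> 4 ^ w" using Suc_square_le_four_pow by simp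
  finally show ?thesis unfolding w_def K_def .
qed

theorem mainTheorem10:
  shows "(\<exists>f g. computable f \<and> computable g \<and>
            (\<forall>V E A. mixed_graph V E A \<longrightarrow>
               chromatic_number V E A \<le> f (treewidth V (underlying (closure_edges E A) (closure_arcs A)))) \<and>
            (\<forall>V E A. mixed_graph V E A \<longrightarrow>
               chromatic_number V E A \<le> g (treedepth V (underlying E A)))) \<and>
         (\<forall>V E A. mixed_graph V E A \<longrightarrow>
               chromatic_number V E A \<le> 2 * vertex_cover_number V (underlying E A) + 1)"
proof (intro conjI allI impI)
  show "\<exists>f g. computable f \<and> computable g \<and>
            (\<forall>V E A. mixed_graph V E A \<longrightarrow>
               chromatic_number V E A \<le> f (treewidth V (underlying (closure_edges E A) (closure_arcs A)))) \<and>
            (\<forall>V E A. mixed_graph V E A \<longrightarrow>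
               chromatic_number V E A \<le> g (treedepth V (underlying E A)))"
    using computable_four_pow chromatic_number_le_treewidth chromatic_number_le_treedepth by blast
  show "chromatic_number V E A \<le> 2 * vertex_cover_number V (underlying E A) + 1"
    if "mixed_graph V E A" for V E A
    using chromatic_number_le_vertex_cover[OF that] .
qed

end
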